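(* Let $f=\frac1n\sum_{i=1}^n f_i$, where each $f_i:\mathbb{R}^d\to\mathbb{R}$ is differentiable, bounded below by $f_i^{\inf}$, and ${\bf L}_i$-matrix smooth with ${\bf L}_i\in\mathbb{S}^d_{++}$; assume $f\ge f^{\inf}$ and $f$ is ${\bf L}$-matrix smooth with ${\bf L}\in\mathbb{S}^d_+$. Let $\{{\bf T}_i^k\}$ be mutually independent random matrices with common distribution on $\mathbb{S}^d_+$ and $\mathbb{E}[{\bf T}_i^k]={\bf I}_d$, fix $x^0$, ${\bf D}\in\mathbb{S}^d_{++}$ and let $x^{k+1}=x^k-\frac1n\sum_i{\bf T}_i^k{\bf D}\nabla f_i(x^k)$. Let $\varepsilon>0$, $K\ge1$, $\Delta^{\inf}:=f^{\inf}-\frac1n\sum_if_i^{\inf}$, $\lambda'_{{\bf D}}:=\max_i\lambda_{\max}\big(\mathbb{E}[{\bf L}_i^{1/2}{\bf D}({\bf T}_i^k-{\bf I}_d){\bf L}({\bf T}_i^k-{\bf I}_d){\bf D}{\bf L}_i^{1/2}]\big)$. If $${\bf D}{\bf L}{\bf D}\preceq{\bf D},\qquad\lambda'_{{\bf D}}\le\frac nK,\qquad 4\Delta^{\inf}\lambda'_{{\bf D}}\le n\varepsilon^2\det({\bf D})^{1/d},\qquad K\ge\frac{12(f(x^0)-f^{\inf})}{\det({\bf D})^{1/d}\varepsilon^2},$$ then $\min_{0\le k\le K-1}\mathbb{E}\big[\|\nabla f(x^k)\|^2_{{\bf D}/\det({\bf D})^{1/d}}\big]\le\varepsilon^2$.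
   Context: A differentiable $g$ is ${\bf M}$-matrix smooth if $g(x)\le g(y)+\langle\nabla g(y),x-y\rangle+\frac12\langle{\bf M}(x-y),x-y\rangle$ for all $x,y$. $\mathbb{S}^d_{+}$/$\mathbb{S}^d_{++}$: symmetric positive semidefinite/definite matrices; $\|x\|_{{\bf Q}}^2:=\langle{\bf Q}x,x\rangle$. All expectations assumed finite. *)

theory Defs
  imports "HOL-Probability.Probability"
begin

definition psd :: "real^'d^'d \<Rightarrow> bool" where
  "psd A \<longleftrightarrow> transpose A = A \<and> (\<forall>x. 0 \<le> x \<bullet> (A *v x))"

definition pd :: "real^'d^'d \<Rightarrow> bool" where
  "pd A \<longleftrightarrow> transpose A = A \<and> (\<forall>x. x \<noteq> 0 \<longrightarrow> 0 < x \<bullet> (A *v x))"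

definition loewner_le :: "real^'d^'d \<Rightarrow> real^'d^'d \<Rightarrow> bool" where
  "loewner_le A B \<longleftrightarrow> psd (B - A)"

definition msqrt :: "real^'d^'d \<Rightarrow> real^'d^'d" where
  "msqrt A = (THE S. psd S \<and> S ** S = A)"

definition lambda_max :: "real^'d^'d \<Rightarrow> real" where
  "lambda_max A = Max {\<mu>. \<exists>v. v \<noteq> 0 \<and> A *v v = \<mu> *s v}"

definition matrix_smooth :: "real^'d^'d \<Rightarrow> (real^'d \<Rightarrow> real) \<Rightarrow> (real^'d \<Rightarrow> real^'d) \<Rightarrow> bool" where
  "matrix_smooth M g gradg \<longleftrightarrow>
     (\<forall>x y. g x \<le> g y + gradg y \<bullet> (x - y) + 1/2 * ((M *v (x - y)) \<bullet> (x - y)))"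

end

theory Submission
  imports Defs
begin

(* Matrix smoothness of f at y - s, with s = (1/n) sum_i T_i D grad f_i(y), bounds f(y - s) by a
   quadratic in s. Since E T_i = I, the mean of s is D grad f(y), and by independence of the
   sketches only the second moments of the noise terms (T_i - I) D grad f_i(y) survive; each is
   bounded by the largest eigenvalue lambda_i of E[L_i^(1/2) D (T - I) L (T - I) D L_i^(1/2)] times
   <L_i^-1 grad f_i(y), grad f_i(y)> <= 2 (f_i(y) - f_i^inf). Conditioning on the past sketches gives
   d_(k+1) + E ||grad f(x^k)||_D^2 / 2 <= (1 + a) d_k + a Delta^inf, with d_k = E f(x^k) - f^inf and
   a = lambda'_D / n. Weighting step k by (1 + a)^-(k+1) telescopes, and a K <= 1 keeps every weight
   above 1/e > 1/3, which turns the sum into the bound on the minimum. *)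

section \<open>Symmetric and positive semidefinite matrices\<close>

lemma inner_matrix_vector_transpose:
  "(x::real^'n) \<bullet> (A *v y) = (transpose A *v x) \<bullet> y"
  by (simp add: dot_lmul_matrix)

lemma inner_symmetric_matrix:
  "transpose A = A \<Longrightarrow> (A *v x) \<bullet> (y::real^'n) = x \<bullet> (A *v y)"
  by (metis inner_matrix_vector_transpose)

lemma transpose_diff: "transpose (A - B) = transpose A - (transpose B :: 'a::ab_group_add^'n^'m)"
  by (simp add: vec_eq_iff transpose_def)

lemma quadratic_form_add:
  fixes L :: "real^'n^'n"
  assumes "transpose L = L"
  shows "(L *v (m + e)) \<bullet> (m + e) = (L *v m) \<bullet> m + 2 * ((L *v m) \<bullet> e) + (L *v e) \<bullet> e"
  using inner_symmetric_matrix[OF assms, of e m]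
  by (simp add: matrix_vector_right_distrib inner_add_left inner_add_right inner_commute)

lemma nonneg_quadratic_linear_coeff_zero:
  fixes a b :: real
  assumes nonneg: "\<And>t. 0 \<le> a * t + b * t\<^sup>2"
  shows "a = 0"
proof -
  define d where "d = \<bar>b\<bar> + 1"
  have d: "d > 0" by (simp add: d_def)
  have "0 \<le> a * (- a / d) + \<bar>b\<bar> * (- a / d)\<^sup>2"
    using nonneg[of "- a / d"] abs_ge_self[of b] by (smt (verit) mult_right_mono zero_le_power2)
  also have "\<dots> = a * (- a / d) + (d - 1) * (- a / d)\<^sup>2" by (simp add: d_def)
  also have "\<dots> = - a\<^sup>2 / d\<^sup>2"
    using d by (simp add: field_simps power2_eq_square)
  finally have "a\<^sup>2 / d\<^sup>2 \<le> 0" by simp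
  with d show ?thesis by (simp add: divide_le_0_iff)
qed

lemma symmetric_rayleigh_maximizer_eigenvector:
  fixes B :: "real^'n^'n"
  assumes sym: "transpose B = B" and S: "subspace S" and inv: "\<And>x. x \<in> S \<Longrightarrow> B *v x \<in> S"
    and le: "\<And>x. x \<in> S \<Longrightarrow> x \<bullet> (B *v x) \<le> m * (x \<bullet> x)"
    and v: "v \<in> S" and eq: "v \<bullet> (B *v v) = m * (v \<bullet> v)"
  shows "B *v v = m *\<^sub>R v"
proof -
  define w where "w = m *\<^sub>R v - B *v v"
  have w: "w \<in> S" using S v inv by (simp add: w_def subspace_diff subspace_scale)
  have "0 \<le> (2 * (w \<bullet> w)) * t + (m * (w \<bullet> w) - w \<bullet> (B *v w)) * t\<^sup>2" for t
  proof -
    have "v + t *\<^sub>R w \<in> S" using S v w by (simp add: subspace_add subspace_scale)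
    from le[OF this] have "0 \<le> m * ((v + t *\<^sub>R w) \<bullet> (v + t *\<^sub>R w)) - (v + t *\<^sub>R w) \<bullet> (B *v (v + t *\<^sub>R w))"
      by simp
    also have "\<dots> = (2 * (w \<bullet> w)) * t + (m * (w \<bullet> w) - w \<bullet> (B *v w)) * t\<^sup>2"
      using eq inner_symmetric_matrix[OF sym, of v w]
      by (simp add: w_def matrix_vector_right_distrib matrix_vector_mult_scaleR inner_add_left
          inner_add_right inner_diff_left inner_diff_right inner_commute power2_eq_square algebra_simps)
    finally show ?thesis .
  qed
  hence "2 * (w \<bullet> w) = 0" by (rule nonneg_quadratic_linear_coeff_zero)
  thus ?thesis by (simp add: w_def)
qed

lemma symmetric_subspace_max_eigenvector:
  fixes B :: "real^'n^'n"
  assumes sym: "transpose B = B" and S: "subspace S" and inv: "\<And>x. x \<in> S \<Longrightarrow> B *v x \<in> S"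
    and ne: "S \<noteq> {0}"
  shows "\<exists>v m. v \<in> S \<and> norm v = 1 \<and> B *v v = m *\<^sub>R v \<and> (\<forall>x\<in>S. x \<bullet> (B *v x) \<le> m * (x \<bullet> x))"
proof -
  let ?K = "S \<inter> sphere 0 1"
  obtain y where y: "y \<in> S" "y \<noteq> 0" using ne S subspace_0 by blast
  have "(1 / norm y) *\<^sub>R y \<in> ?K" using y S by (simp add: subspace_scale)
  moreover have "compact ?K" using S by (intro closed_Int_compact closed_subspace compact_sphere)
  moreover have "continuous_on ?K (\<lambda>x. x \<bullet> (B *v x))" by (intro continuous_intros)
  ultimately obtain v where v: "v \<in> ?K" and vmax: "\<And>y. y \<in> ?K \<Longrightarrow> y \<bullet> (B *v y) \<le> v \<bullet> (B *v v)"
    using continuous_attains_sup[of ?K "\<lambda>x. x \<bullet> (B *v x)"] by blast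
  define m where "m = v \<bullet> (B *v v)"
  have bound: "x \<bullet> (B *v x) \<le> m * (x \<bullet> x)" if x: "x \<in> S" for x
  proof (cases "x = 0")
    case False
    have "(1 / norm x) *\<^sub>R x \<in> ?K" using x False S by (simp add: subspace_scale)
    hence "(x \<bullet> (B *v x)) / (norm x)\<^sup>2 \<le> m"
      using vmax[of "(1 / norm x) *\<^sub>R x"] by (simp add: m_def matrix_vector_mult_scaleR power2_eq_square)
    thus ?thesis using False by (simp add: divide_le_eq power2_norm_eq_inner)
  qed simp
  have "v \<in> S" "norm v = 1" using v by auto
  moreover from this have "B *v v = m *\<^sub>R v"
    by (intro symmetric_rayleigh_maximizer_eigenvector[OF sym S inv bound]) (simp_all add: m_def dot_square_norm)
  ultimately show ?thesis using bound by blast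
qed

lemma symmetric_eigenvector_orthogonal_complement:
  fixes B :: "real^'n^'n"
  assumes sym: "transpose B = B" and S: "subspace S" and inv: "\<And>x. x \<in> S \<Longrightarrow> B *v x \<in> S"
    and v: "v \<in> S" "v \<noteq> 0" "B *v v = m *\<^sub>R v"
  defines "S' \<equiv> S \<inter> {x. orthogonal v x}"
  shows "subspace S'" and "\<And>x. x \<in> S' \<Longrightarrow> B *v x \<in> S'" and "dim S' < dim S"
proof -
  show S': "subspace S'"
    unfolding S'_def using S subspace_orthogonal_to_vector[of v] by (metis subspace_inter Collect_cong)
  show "B *v x \<in> S'" if "x \<in> S'" for x
  proof -
    have "v \<bullet> (B *v x) = m * (v \<bullet> x)" using v inner_symmetric_matrix[OF sym, of v x] by simp
    thus ?thesis using that inv by (auto simp: S'_def orthogonal_def)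
  qed
  have "v \<notin> S'" using v(2) by (simp add: S'_def orthogonal_def)
  hence "S' \<subset> S" using v(1) by (auto simp: S'_def)
  thus "dim S' < dim S" using dim_psubset[of S' S] S' S by (metis span_eq_iff)
qed

lemma symmetric_subspace_orthonormal_eigenbasis:
  fixes B :: "real^'n^'n"
  assumes sym: "transpose B = B"
  shows "subspace S \<Longrightarrow> (\<And>x. x \<in> S \<Longrightarrow> B *v x \<in> S) \<Longrightarrow>
    \<exists>E. E \<subseteq> S \<and> pairwise orthogonal E \<and> (\<forall>e\<in>E. norm e = 1 \<and> (\<exists>\<mu>. B *v e = \<mu> *\<^sub>R e)) \<and> S \<subseteq> span E"
proof (induction "dim S" arbitrary: S rule: less_induct)
  case less
  show ?case
  proof (cases "S = {0}")
    case True
    thus ?thesis by (intro exI[of _ "{}"]) auto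
  next
    case False
    obtain v m where v: "v \<in> S" "norm v = 1" "B *v v = m *\<^sub>R v"
      using symmetric_subspace_max_eigenvector[OF sym less.prems False] by blast
    have vv: "v \<bullet> v = 1" using v by (simp add: dot_square_norm)
    define S' where "S' = S \<inter> {x. orthogonal v x}"
    have "v \<noteq> 0" using vv by auto
    note S' = symmetric_eigenvector_orthogonal_complement[OF sym less.prems v(1) this v(3), folded S'_def]
    obtain E' where E': "E' \<subseteq> S'" "pairwise orthogonal E'"
      "\<forall>e\<in>E'. norm e = 1 \<and> (\<exists>\<mu>. B *v e = \<mu> *\<^sub>R e)" "S' \<subseteq> span E'"
      using less.hyps[OF S'(3,1,2)] by blast
    show ?thesis
    proof (intro exI[of _ "insert v E'"] conjI)
      show "insert v E' \<subseteq> S" using E'(1) v(1) by (auto simp: S'_def)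
      show "pairwise orthogonal (insert v E')"
        using E'(1,2) by (auto simp: pairwise_insert S'_def orthogonal_commute)
      show "\<forall>e\<in>insert v E'. norm e = 1 \<and> (\<exists>\<mu>. B *v e = \<mu> *\<^sub>R e)" using E'(3) v by auto
      show "S \<subseteq> span (insert v E')"
      proof
        fix x assume x: "x \<in> S"
        have "x - (v \<bullet> x) *\<^sub>R v \<in> S'"
          using x v(1) less.prems(1) vv
          by (auto simp: S'_def orthogonal_def inner_diff_right subspace_diff subspace_scale)
        hence "x - (v \<bullet> x) *\<^sub>R v \<in> span (insert v E')"
          using E'(4) span_mono[of E' "insert v E'"] by auto
        from span_add[OF this span_scale[OF span_base, of v _ "v \<bullet> x"]]
        show "x \<in> span (insert v E')" by simp
      qed
    qed
  qed
qed

lemma symmetric_orthonormal_eigenbasis: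
  fixes B :: "real^'n^'n"
  assumes sym: "transpose B = B"
  obtains E where "finite E" "pairwise orthogonal E" "\<And>e. e \<in> E \<Longrightarrow> norm e = 1"
    "\<And>e. e \<in> E \<Longrightarrow> \<exists>\<mu>. B *v e = \<mu> *\<^sub>R e" "span E = UNIV"
proof -
  obtain E where E: "pairwise orthogonal E" "\<forall>e\<in>E. norm e = 1 \<and> (\<exists>\<mu>. B *v e = \<mu> *\<^sub>R e)"
    "UNIV \<subseteq> span E"
    using symmetric_subspace_orthonormal_eigenbasis[OF sym, of UNIV] by auto
  have "0 \<notin> E" using E(2) by force
  hence "finite E" using E(1) pairwise_orthogonal_independent independent_imp_finite by blast
  with E show ?thesis by (intro that) auto
qed

lemma matrix_eq_on_spanning_set:
  fixes A B :: "real^'n^'m"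
  assumes "span E = UNIV" and "\<And>e. e \<in> E \<Longrightarrow> A *v e = B *v e"
  shows "A = B"
proof -
  have "A *v x = B *v x" for x
    by (rule linear_eq_on_span[where B=E, OF matrix_vector_mul_linear matrix_vector_mul_linear])
       (use assms in auto)
  thus ?thesis by (simp add: matrix_eq)
qed

lemma psd_sqrt_eigenvector:
  fixes S A :: "real^'n^'n"
  assumes S: "psd S" and SS: "S ** S = A" and v: "A *v v = \<alpha> *\<^sub>R v"
  shows "S *v v = sqrt \<alpha> *\<^sub>R v"
proof (cases "v = 0")
  case False
  have Ssym: "transpose S = S" and Snn: "\<And>x. 0 \<le> x \<bullet> (S *v x)" using S by (auto simp: psd_def)
  have SSv: "S *v (S *v x) = A *v x" for x using SS by (simp add: matrix_vector_mul_assoc)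
  have "\<alpha> * (v \<bullet> v) = (S *v v) \<bullet> (S *v v)"
    using v inner_symmetric_matrix[OF Ssym, of "S *v v" v] by (simp add: SSv)
  hence "0 \<le> \<alpha> * (v \<bullet> v)" by simp
  moreover have "0 < v \<bullet> v" using False by simp
  ultimately have "\<alpha> \<ge> 0" by (simp add: zero_le_mult_iff)
  define r where "r = sqrt \<alpha>"
  have r: "r \<ge> 0" "r * r = \<alpha>" using \<open>\<alpha> \<ge> 0\<close> by (auto simp: r_def)
  define w where "w = S *v v - r *\<^sub>R v"
  \<comment> \<open>w is an eigenvector of S for the eigenvalue -r, which psd forbids unless w = 0\<close>
  have "S *v w = - r *\<^sub>R w"
    using SSv[of v] v r by (simp add: w_def matrix_vector_mult_diff_distrib matrix_vector_mult_scaleR algebra_simps)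
  hence wSw: "r * (w \<bullet> w) \<le> 0" using Snn[of w] by simp
  show ?thesis
  proof (cases "r = 0")
    case True
    hence "S *v v = 0" using \<open>\<alpha> * (v \<bullet> v) = (S *v v) \<bullet> (S *v v)\<close> r by simp
    thus ?thesis using True by (simp add: r_def)
  next
    case False
    hence "w \<bullet> w \<le> 0" using wSw r(1) by (simp add: mult_le_0_iff)
    hence "w = 0" by (metis inner_ge_zero inner_eq_zero_iff order_antisym)
    thus ?thesis by (simp add: w_def r_def)
  qed
qed simp

lemma matrix_vector_mult_outer_sum:
  fixes E :: "(real^'n) set"
  shows "(\<chi> i j. \<Sum>e\<in>E. c e * e$i * e$j) *v x = (\<Sum>e\<in>E. (c e * (e \<bullet> x)) *\<^sub>R e)"
proof -
  have "(\<Sum>j\<in>UNIV. (\<Sum>e\<in>E. c e * e$i * e$j) * x$j) = (\<Sum>e\<in>E. c e * (\<Sum>j\<in>UNIV. e$j * x$j) * e$i)" for i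
    by (simp add: sum_distrib_left sum_distrib_right algebra_simps sum.swap[of _ UNIV])
  thus ?thesis by (simp add: vec_eq_iff matrix_vector_mult_def inner_vec_def)
qed

lemma sum_orthonormal_scaleR_inner:
  fixes E :: "(real^'n) set"
  assumes "finite E" "pairwise orthogonal E" "e \<in> E" "norm e = 1"
  shows "(\<Sum>e'\<in>E. (c e' * (e' \<bullet> e)) *\<^sub>R e') = c e *\<^sub>R e"
proof -
  have "(\<Sum>e'\<in>E. (c e' * (e' \<bullet> e)) *\<^sub>R e') = (\<Sum>e'\<in>E. if e' = e then c e *\<^sub>R e else 0)"
    using assms by (intro sum.cong) (auto simp: pairwise_def orthogonal_def dot_square_norm)
  thus ?thesis using assms by simp
qed

lemma psd_sqrt_exists:
  fixes A :: "real^'n^'n"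
  assumes A: "psd A"
  shows "\<exists>R. psd R \<and> R ** R = A"
proof -
  have sym: "transpose A = A" using A by (simp add: psd_def)
  obtain E where E: "finite E" "pairwise orthogonal E" "\<And>e. e \<in> E \<Longrightarrow> norm e = 1"
    "\<And>e. e \<in> E \<Longrightarrow> \<exists>\<mu>. A *v e = \<mu> *\<^sub>R e" "span E = UNIV"
    by (rule symmetric_orthonormal_eigenbasis[OF sym]) blast
  define \<mu> where "\<mu> e = e \<bullet> (A *v e)" for e
  have eig: "A *v e = \<mu> e *\<^sub>R e" if "e \<in> E" for e
    using E(3,4)[OF that] by (auto simp: \<mu>_def dot_square_norm)
  have \<mu>_nonneg: "\<mu> e \<ge> 0" for e using A by (simp add: psd_def \<mu>_def)
  define R where "R = (\<chi> i j. \<Sum>e\<in>E. sqrt (\<mu> e) * e$i * e$j)"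
  have Rx: "R *v x = (\<Sum>e\<in>E. (sqrt (\<mu> e) * (e \<bullet> x)) *\<^sub>R e)" for x
    unfolding R_def by (rule matrix_vector_mult_outer_sum)
  have Re: "R *v e = sqrt (\<mu> e) *\<^sub>R e" if "e \<in> E" for e
    unfolding Rx using sum_orthonormal_scaleR_inner[OF E(1,2) that E(3)[OF that]] .
  have "transpose R = R" unfolding R_def by (simp add: vec_eq_iff transpose_def ac_simps)
  moreover have "0 \<le> x \<bullet> (R *v x)" for x
    unfolding Rx by (auto simp: inner_sum_right inner_commute mult.assoc \<mu>_nonneg intro!: sum_nonneg)
  moreover have "R ** R = A"
  proof (rule matrix_eq_on_spanning_set[OF E(5)])
    fix e assume "e \<in> E"
    thus "(R ** R) *v e = A *v e"
      using \<mu>_nonneg[of e] by (simp add: matrix_vector_mul_assoc[symmetric] Re eig matrix_vector_mult_scaleR)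
  qed
  ultimately show ?thesis by (auto simp: psd_def)
qed

lemma psd_sqrt_unique:
  fixes A S1 S2 :: "real^'n^'n"
  assumes A: "psd A" and S1: "psd S1" "S1 ** S1 = A" and S2: "psd S2" "S2 ** S2 = A"
  shows "S1 = S2"
proof -
  have sym: "transpose A = A" using A by (simp add: psd_def)
  obtain E where E: "\<And>e. e \<in> E \<Longrightarrow> \<exists>\<mu>. A *v e = \<mu> *\<^sub>R e" "span E = UNIV"
    by (rule symmetric_orthonormal_eigenbasis[OF sym]) blast
  show ?thesis
    using E(1) psd_sqrt_eigenvector[OF S1] psd_sqrt_eigenvector[OF S2]
    by (intro matrix_eq_on_spanning_set[OF E(2)]) metis
qed

lemma msqrt:
  fixes A :: "real^'n^'n"
  assumes "psd A"
  shows msqrt_psd: "psd (msqrt A)" and msqrt_square: "msqrt A ** msqrt A = A"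
proof -
  have "\<exists>!S. psd S \<and> S ** S = A"
    using psd_sqrt_exists[OF assms] psd_sqrt_unique[OF assms] by blast
  hence "psd (msqrt A) \<and> msqrt A ** msqrt A = A" unfolding msqrt_def by (rule theI')
  thus "psd (msqrt A)" "msqrt A ** msqrt A = A" by auto
qed

lemma quadratic_form_congruence:
  fixes L :: "real^'n^'n" and C :: "real^'m^'n"
  shows "u \<bullet> ((transpose C ** L ** C) *v u) = (C *v u) \<bullet> (L *v (C *v u))"
proof -
  have "u \<bullet> ((transpose C ** L ** C) *v u) = u \<bullet> (transpose C *v (L *v (C *v u)))"
    by (simp only: matrix_vector_mul_assoc[symmetric])
  also have "\<dots> = (C *v u) \<bullet> (L *v (C *v u))"
    by (simp only: inner_matrix_vector_transpose transpose_transpose)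
  finally show ?thesis .
qed

lemma psd_congruence:
  fixes L :: "real^'n^'n" and C :: "real^'m^'n"
  assumes "psd L"
  shows "psd (transpose C ** L ** C)"
  using assms unfolding psd_def quadratic_form_congruence
  by (simp add: matrix_transpose_mul matrix_mul_assoc)

lemma quadratic_form_le_of_loewner_le:
  fixes D L :: "real^'n^'n"
  assumes "loewner_le (D ** L ** D) D" and "transpose D = D"
  shows "(L *v (D *v v)) \<bullet> (D *v v) \<le> v \<bullet> (D *v v)"
proof -
  have "0 \<le> v \<bullet> ((D - D ** L ** D) *v v)" using assms(1) by (simp add: loewner_le_def psd_def)
  also have "\<dots> = v \<bullet> (D *v v) - (D *v v) \<bullet> (L *v (D *v v))"
    using inner_symmetric_matrix[OF assms(2), of v "L *v (D *v v)"]
    by (simp add: matrix_vector_mult_diff_rdistrib inner_diff_right matrix_vector_mul_assoc[symmetric])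
  finally show ?thesis by (simp add: inner_commute)
qed

lemma symmetric_eigenvectors_orthogonal:
  fixes B :: "real^'n^'n"
  assumes "transpose B = B" "B *v v = a *\<^sub>R v" "B *v w = b *\<^sub>R w" "a \<noteq> b"
  shows "v \<bullet> w = 0"
proof -
  have "a * (v \<bullet> w) = b * (v \<bullet> w)"
    using inner_symmetric_matrix[OF assms(1), of v w] assms(2,3) by simp
  thus ?thesis using assms(4) by simp
qed

lemma finite_eigenvalues_symmetric:
  fixes B :: "real^'n^'n"
  assumes sym: "transpose B = B"
  shows "finite {\<mu>. \<exists>v. v \<noteq> 0 \<and> B *v v = \<mu> *s v}" (is "finite ?Eig")
proof -
  define ev where "ev \<mu> = (SOME v. v \<noteq> 0 \<and> B *v v = \<mu> *\<^sub>R v)" for \<mu>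
  have ev: "ev \<mu> \<noteq> 0 \<and> B *v ev \<mu> = \<mu> *\<^sub>R ev \<mu>" if "\<mu> \<in> ?Eig" for \<mu>
  proof -
    from that obtain v where "v \<noteq> 0 \<and> B *v v = \<mu> *\<^sub>R v" by (auto simp: scalar_mult_eq_scaleR)
    thus ?thesis unfolding ev_def by (rule someI)
  qed
  have inj: "inj_on ev ?Eig"
  proof (rule inj_onI)
    fix a b assume a: "a \<in> ?Eig" and b: "b \<in> ?Eig" and eq: "ev a = ev b"
    have "a *\<^sub>R ev a = b *\<^sub>R ev a" using ev[OF a] ev[OF b] eq by metis
    thus "a = b" using ev[OF a] by simp
  qed
  have "ev a \<bullet> ev b = 0" if a: "a \<in> ?Eig" and b: "b \<in> ?Eig" and ne: "ev a \<noteq> ev b" for a b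
  proof (rule symmetric_eigenvectors_orthogonal[OF sym])
    show "a \<noteq> b" using ne by blast
  qed (use ev[OF a] ev[OF b] in auto)
  hence "pairwise orthogonal (ev ` ?Eig)" by (auto simp: pairwise_def orthogonal_def)
  moreover have "0 \<notin> ev ` ?Eig"
  proof
    assume "0 \<in> ev ` ?Eig"
    then obtain \<mu> where "\<mu> \<in> ?Eig" "ev \<mu> = 0" by (elim imageE) simp
    thus False using ev[of \<mu>] by simp
  qed
  ultimately have "finite (ev ` ?Eig)"
    using pairwise_orthogonal_independent independent_imp_finite by blast
  thus ?thesis using inj finite_imageD by blast
qed

lemma lambda_max_eqI:
  fixes B :: "real^'n^'n"
  assumes sym: "transpose B = B" and v: "v \<noteq> 0" "B *v v = m *\<^sub>R v"
    and le: "\<And>x. x \<bullet> (B *v x) \<le> m * (x \<bullet> x)"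
  shows "lambda_max B = m"
  unfolding lambda_max_def
proof (rule Max_eqI[OF finite_eigenvalues_symmetric[OF sym]])
  show "m \<in> {\<mu>. \<exists>v. v \<noteq> 0 \<and> B *v v = \<mu> *s v}" using v by (auto simp: scalar_mult_eq_scaleR)
  fix \<mu> assume "\<mu> \<in> {\<mu>. \<exists>v. v \<noteq> 0 \<and> B *v v = \<mu> *s v}"
  then obtain w where w: "w \<noteq> 0" "B *v w = \<mu> *\<^sub>R w" by (auto simp: scalar_mult_eq_scaleR)
  have "\<mu> * (w \<bullet> w) \<le> m * (w \<bullet> w)" using le[of w] w(2) by simp
  thus "\<mu> \<le> m" using w(1) by simp
qed

lemma lambda_max_rayleigh:
  fixes B :: "real^'n^'n"
  assumes sym: "transpose B = B"
  obtains v where "norm v = 1" "B *v v = lambda_max B *\<^sub>R v"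
    "\<And>x. x \<bullet> (B *v x) \<le> lambda_max B * (x \<bullet> x)"
proof -
  have "(UNIV :: (real^'n) set) \<noteq> {0}" using zero_neq_one[where 'a="real^'n"] by blast
  then obtain v m where v: "norm v = 1" "B *v v = m *\<^sub>R v" "\<forall>x. x \<bullet> (B *v x) \<le> m * (x \<bullet> x)"
    using symmetric_subspace_max_eigenvector[OF sym subspace_UNIV] by blast
  have "lambda_max B = m" by (rule lambda_max_eqI[OF sym]) (use v in auto)
  with v show ?thesis by (intro that[of v]) auto
qed

lemma quadratic_form_le_lambda_max:
  fixes B :: "real^'n^'n"
  assumes "transpose B = B"
  shows "x \<bullet> (B *v x) \<le> lambda_max B * (x \<bullet> x)"
  by (rule lambda_max_rayleigh[OF assms]) simp

lemma lambda_max_nonneg: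
  fixes B :: "real^'n^'n"
  assumes "psd B"
  shows "0 \<le> lambda_max B"
proof -
  have "transpose B = B" using assms by (simp add: psd_def)
  then obtain v where "norm v = 1" "B *v v = lambda_max B *\<^sub>R v"
    by (rule lambda_max_rayleigh)
  moreover have "0 \<le> v \<bullet> (B *v v)" using assms by (simp add: psd_def)
  ultimately show ?thesis by (simp add: dot_square_norm)
qed

lemma pd_imp_psd: "pd A \<Longrightarrow> psd A"
  unfolding pd_def psd_def by (metis inner_zero_left matrix_vector_mult_0_right order_le_less)

lemma pd_inj:
  fixes A :: "real^'n^'n"
  assumes "pd A"
  shows "inj ((*v) A)"
proof (rule injI)
  fix x y assume "A *v x = A *v y"
  hence "(x - y) \<bullet> (A *v (x - y)) = 0" by (simp add: matrix_vector_mult_diff_distrib)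
  thus "x = y" using assms unfolding pd_def by (metis less_irrefl right_minus_eq)
qed

lemma pd_surj:
  fixes A :: "real^'n^'n"
  assumes "pd A"
  shows "surj ((*v) A)"
  using linear_injective_imp_surjective[OF matrix_vector_mul_linear pd_inj[OF assms]] by simp

lemma pd_det_pos:
  fixes A :: "real^'n^'n"
  assumes "pd A"
  shows "det A > 0"
proof -
  have "det A = det (msqrt A) ^ 2"
    using msqrt_square[OF pd_imp_psd[OF assms]] det_mul[of "msqrt A" "msqrt A"] by (simp add: power2_eq_square)
  moreover have "det A \<noteq> 0"
    using det_nz_iff_inj[OF matrix_vector_mul_linear[of A]] pd_inj[OF assms] by simp
  ultimately show ?thesis by (simp add: zero_less_power2)
qed

section \<open>Measurability and integrals of random matrices\<close>

lemma continuous_on_matrix_vector_mult [continuous_intros]: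
  fixes f :: "'a::topological_space \<Rightarrow> real^'n^'m" and g :: "'a \<Rightarrow> real^'n"
  shows "continuous_on S f \<Longrightarrow> continuous_on S g \<Longrightarrow> continuous_on S (\<lambda>x. f x *v g x)"
  unfolding matrix_vector_mult_def by (intro continuous_intros)

lemma continuous_on_matrix_matrix_mult [continuous_intros]:
  fixes f :: "'a::topological_space \<Rightarrow> real^'n^'m" and g :: "'a \<Rightarrow> real^'k^'n"
  shows "continuous_on S f \<Longrightarrow> continuous_on S g \<Longrightarrow> continuous_on S (\<lambda>x. f x ** g x)"
  unfolding matrix_matrix_mult_def by (intro continuous_intros)

lemma borel_measurable_matrix_vector_mult [measurable (raw)]:
  fixes f :: "'a \<Rightarrow> real^'n^'m" and g :: "'a \<Rightarrow> real^'n"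
  assumes "f \<in> borel_measurable M" "g \<in> borel_measurable M"
  shows "(\<lambda>x. f x *v g x) \<in> borel_measurable M"
  by (rule borel_measurable_continuous_Pair[OF assms]) (intro continuous_intros)

lemma bounded_linear_matrix_vector_mult_left:
  "bounded_linear (\<lambda>A::real^'n^'m. A *v x)"
proof -
  have "linear (\<lambda>A::real^'n^'m. A *v x)"
    by (rule linearI) (simp_all add: matrix_vector_mult_add_rdistrib scaleR_matrix_vector_assoc)
  thus ?thesis by (simp add: linear_conv_bounded_linear)
qed

lemma bounded_linear_transpose: "bounded_linear (transpose :: real^'n^'m \<Rightarrow> real^'m^'n)"
proof -
  have "linear (transpose :: real^'n^'m \<Rightarrow> real^'m^'n)"
    by (rule linearI) (simp_all add: vec_eq_iff transpose_def)
  thus ?thesis by (simp add: linear_conv_bounded_linear)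
qed

lemma borel_measurable_gradient:
  fixes F :: "real^'n \<Rightarrow> real" and G :: "real^'n \<Rightarrow> real^'n"
  assumes deriv: "\<And>y. (F has_derivative (\<lambda>h. G y \<bullet> h)) (at y)"
  shows "G \<in> borel_measurable borel"
proof -
  have F: "continuous_on UNIV F"
    using deriv by (meson continuous_at_imp_continuous_on has_derivative_continuous)
  \<comment> \<open>each partial derivative is a pointwise limit of continuous difference quotients\<close>
  have "(\<lambda>y. G y $ j) \<in> borel_measurable borel" for j
  proof (rule borel_measurable_LIMSEQ_real)
    let ?e = "axis j (1::real)"
    define h :: "nat \<Rightarrow> real" where "h m = 1 / real (Suc m)" for m
    show "(\<lambda>y. (F (y + h m *\<^sub>R ?e) - F y) / h m) \<in> borel_measurable borel" for m
      by (intro borel_measurable_continuous_onI continuous_intros F[THEN continuous_on_compose2]) (auto simp: h_def)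
    fix y :: "real^'n"
    have "((\<lambda>t. y + t *\<^sub>R ?e) has_derivative (\<lambda>t. t *\<^sub>R ?e)) (at 0)"
      by (intro derivative_eq_intros) auto
    from diff_chain_at[OF this deriv]
    have "((\<lambda>t. F (y + t *\<^sub>R ?e)) has_derivative (\<lambda>t. G y \<bullet> (t *\<^sub>R ?e))) (at 0)"
      by (simp add: o_def)
    also have "(\<lambda>t. G y \<bullet> (t *\<^sub>R ?e)) = (*) (G y $ j)"
      by (auto simp: fun_eq_iff inner_axis)
    finally have "((\<lambda>t. F (y + t *\<^sub>R ?e)) has_real_derivative G y $ j) (at 0)"
      unfolding has_field_derivative_def .
    hence "((\<lambda>t. (F (y + t *\<^sub>R ?e) - F y) / t) \<longlongrightarrow> G y $ j) (at 0)"
      by (simp add: has_field_derivative_iff)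
    moreover have "filterlim h (at 0) sequentially"
      unfolding h_def filterlim_at using LIMSEQ_Suc[OF lim_1_over_n] by auto
    ultimately show "(\<lambda>m. (F (y + h m *\<^sub>R ?e) - F y) / h m) \<longlonglongrightarrow> G y $ j"
      by (rule filterlim_compose)
  qed
  hence "(\<lambda>y. G y \<bullet> b) \<in> borel_measurable borel" if "b \<in> Basis" for b :: "real^'n"
    using that by (auto simp: Basis_vec_def inner_axis)
  thus ?thesis by (rule borel_measurable_euclidean_space[THEN iffD2, rule_format])
qed

lemma integral_matrix_vector_mult_left:
  fixes T :: "'a \<Rightarrow> real^'n^'m"
  assumes "integrable M T"
  shows "integrable M (\<lambda>\<omega>. T \<omega> *v x)" "(\<integral>\<omega>. T \<omega> *v x \<partial>M) = integral\<^sup>L M T *v x"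
  using integrable_bounded_linear[OF bounded_linear_matrix_vector_mult_left assms]
    integral_bounded_linear[OF bounded_linear_matrix_vector_mult_left assms] by auto

lemma integral_psd:
  fixes F :: "'a \<Rightarrow> real^'n^'n"
  assumes int: "integrable M F" and psd: "AE \<omega> in M. psd (F \<omega>)"
  shows "psd (integral\<^sup>L M F)"
  unfolding psd_def
proof (intro conjI allI)
  have "transpose (integral\<^sup>L M F) = (\<integral>\<omega>. transpose (F \<omega>) \<partial>M)"
    by (rule integral_bounded_linear[OF bounded_linear_transpose int, symmetric])
  also have "\<dots> = integral\<^sup>L M F"
  proof (rule integral_cong_AE)
    show "(\<lambda>\<omega>. transpose (F \<omega>)) \<in> borel_measurable M"
      using borel_measurable_integrable[OF int] bounded_linear_transpose
      by (intro borel_measurable_continuous_on[where f=transpose]) (auto intro: linear_continuous_on)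
    show "AE \<omega> in M. transpose (F \<omega>) = F \<omega>" using psd by (auto simp: psd_def)
  qed (use borel_measurable_integrable[OF int] in auto)
  finally show "transpose (integral\<^sup>L M F) = integral\<^sup>L M F" .
  fix u
  have "u \<bullet> (integral\<^sup>L M F *v u) = (\<integral>\<omega>. u \<bullet> (F \<omega> *v u) \<partial>M)"
    using integral_matrix_vector_mult_left[OF int, of u] by simp
  also have "\<dots> \<ge> 0"
    using psd by (intro integral_nonneg_AE) (auto simp: psd_def)
  finally show "0 \<le> u \<bullet> (integral\<^sup>L M F *v u)" .
qed

context prob_space
begin

lemma indep_integral_quadratic_cross_zero:
  fixes X Y :: "'a \<Rightarrow> real^'n" and L :: "real^'n^'n"
  assumes indep: "indep_var borel X borel Y" and X: "integrable M X" "integral\<^sup>L M X = 0"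
    and Y: "integrable M Y"
  shows "integrable M (\<lambda>\<omega>. (L *v X \<omega>) \<bullet> Y \<omega>)" "(\<integral>\<omega>. (L *v X \<omega>) \<bullet> Y \<omega> \<partial>M) = 0"
proof -
  have eq: "(L *v X \<omega>) \<bullet> Y \<omega> = (\<Sum>p\<in>UNIV. (L *v X \<omega>) $ p * Y \<omega> $ p)" for \<omega>
    by (simp add: inner_vec_def)
  have bl: "bounded_linear (\<lambda>x. (L *v x) $ p)" for p
    by (rule bounded_linear_compose[OF bounded_linear_vec_nth matrix_vector_mul_bounded_linear])
  have iX: "integrable M (\<lambda>\<omega>. (L *v X \<omega>) $ p)" "(\<integral>\<omega>. (L *v X \<omega>) $ p \<partial>M) = 0" for p
    using integrable_bounded_linear[OF bl X(1)] integral_bounded_linear[OF bl X(1)] X(2) by auto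
  have iY: "integrable M (\<lambda>\<omega>. Y \<omega> $ p)" for p
    by (rule integrable_bounded_linear[OF bounded_linear_vec_nth Y])
  have "indep_var borel ((\<lambda>x. (L *v x) $ p) \<circ> X) borel ((\<lambda>y. y $ p) \<circ> Y)" for p
    by (rule indep_var_compose[OF indep]) (simp_all add: linear_continuous_on bl bounded_linear_vec_nth
        borel_measurable_continuous_onI)
  hence ind: "indep_var borel (\<lambda>\<omega>. (L *v X \<omega>) $ p) borel (\<lambda>\<omega>. Y \<omega> $ p)" for p
    by (simp add: o_def)
  show "integrable M (\<lambda>\<omega>. (L *v X \<omega>) \<bullet> Y \<omega>)"
    unfolding eq by (intro Bochner_Integration.integrable_sum indep_var_integrable[OF ind iX(1) iY])
  show "(\<integral>\<omega>. (L *v X \<omega>) \<bullet> Y \<omega> \<partial>M) = 0"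
    unfolding eq
    by (simp add: Bochner_Integration.integral_sum indep_var_integrable[OF ind iX(1) iY]
        indep_var_lebesgue_integral[OF ind iX(1) iY] iX(2))
qed

lemma integral_quadratic_form_sum_indep:
  fixes V :: "'i \<Rightarrow> 'a \<Rightarrow> real^'n" and L :: "real^'n^'n"
  assumes I: "finite I"
    and indep: "\<And>i j. i \<in> I \<Longrightarrow> j \<in> I \<Longrightarrow> i \<noteq> j \<Longrightarrow> indep_var borel (V i) borel (V j)"
    and int: "\<And>i. i \<in> I \<Longrightarrow> integrable M (V i)"
    and mean: "\<And>i. i \<in> I \<Longrightarrow> integral\<^sup>L M (V i) = 0"
    and int_diag: "\<And>i. i \<in> I \<Longrightarrow> integrable M (\<lambda>\<omega>. (L *v V i \<omega>) \<bullet> V i \<omega>)"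
  shows "integrable M (\<lambda>\<omega>. (L *v (\<Sum>i\<in>I. V i \<omega>)) \<bullet> (\<Sum>i\<in>I. V i \<omega>))"
    and "(\<integral>\<omega>. (L *v (\<Sum>i\<in>I. V i \<omega>)) \<bullet> (\<Sum>i\<in>I. V i \<omega>) \<partial>M) = (\<Sum>i\<in>I. \<integral>\<omega>. (L *v V i \<omega>) \<bullet> V i \<omega> \<partial>M)"
proof -
  define q where "q i j \<omega> = (L *v V i \<omega>) \<bullet> V j \<omega>" for i j \<omega>
  have eq: "(L *v (\<Sum>i\<in>I. V i \<omega>)) \<bullet> (\<Sum>i\<in>I. V i \<omega>) = (\<Sum>i\<in>I. \<Sum>j\<in>I. q i j \<omega>)" for \<omega>
    unfolding q_def by (simp add: vec.sum inner_sum_left inner_sum_right) (rule sum.swap)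
  have q: "integrable M (q i j) \<and> (i \<noteq> j \<longrightarrow> integral\<^sup>L M (q i j) = 0)"
    if "i \<in> I" "j \<in> I" for i j
  proof (cases "i = j")
    case True
    thus ?thesis using int_diag[OF that(1)] by (simp add: q_def[abs_def])
  next
    case False
    from indep_integral_quadratic_cross_zero[OF indep[OF that False] int[OF that(1)] mean[OF that(1)] int[OF that(2)]]
    show ?thesis using False by (simp add: q_def[abs_def])
  qed
  have int_row: "integrable M (\<lambda>\<omega>. \<Sum>j\<in>I. q i j \<omega>)" if "i \<in> I" for i
    using q that by (intro Bochner_Integration.integrable_sum) auto
  show "integrable M (\<lambda>\<omega>. (L *v (\<Sum>i\<in>I. V i \<omega>)) \<bullet> (\<Sum>i\<in>I. V i \<omega>))"
    unfolding eq by (rule Bochner_Integration.integrable_sum[OF int_row])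
  have "(\<integral>\<omega>. (L *v (\<Sum>i\<in>I. V i \<omega>)) \<bullet> (\<Sum>i\<in>I. V i \<omega>) \<partial>M) = (\<Sum>i\<in>I. \<integral>\<omega>. (\<Sum>j\<in>I. q i j \<omega>) \<partial>M)"
    unfolding eq by (rule Bochner_Integration.integral_sum[OF int_row])
  also have "\<dots> = (\<Sum>i\<in>I. \<Sum>j\<in>I. integral\<^sup>L M (q i j))"
    using q by (intro sum.cong refl Bochner_Integration.integral_sum) blast
  also have "\<dots> = (\<Sum>i\<in>I. \<Sum>j\<in>I. if j = i then integral\<^sup>L M (q i i) else 0)"
    using q by (intro sum.cong refl) auto
  also have "\<dots> = (\<Sum>i\<in>I. integral\<^sup>L M (q i i))"
    using I by simp
  finally show "(\<integral>\<omega>. (L *v (\<Sum>i\<in>I. V i \<omega>)) \<bullet> (\<Sum>i\<in>I. V i \<omega>) \<partial>M) = (\<Sum>i\<in>I. \<integral>\<omega>. (L *v V i \<omega>) \<bullet> V i \<omega> \<partial>M)"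
    unfolding q_def .
qed

lemma nn_integral_indep_var_le:
  fixes N N' :: "'b measure" and H :: "'b \<times> 'b \<Rightarrow> ennreal" and G :: "'b \<Rightarrow> ennreal"
  assumes indep: "indep_var N X N' Y"
    and H: "H \<in> borel_measurable (N \<Otimes>\<^sub>M N')" and G: "G \<in> borel_measurable N"
    and le: "\<And>a. a \<in> space N \<Longrightarrow> (\<integral>\<^sup>+\<omega>. H (a, Y \<omega>) \<partial>M) \<le> G a"
  shows "(\<integral>\<^sup>+\<omega>. H (X \<omega>, Y \<omega>) \<partial>M) \<le> (\<integral>\<^sup>+\<omega>. G (X \<omega>) \<partial>M)"
proof -
  have X: "X \<in> measurable M N" and Y: "Y \<in> measurable M N'"
    using indep by (rule indep_var_rv1, rule indep_var_rv2)
  interpret Y: prob_space "distr M N' Y" by (rule prob_space_distr[OF Y])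
  have "(\<integral>\<^sup>+\<omega>. H (X \<omega>, Y \<omega>) \<partial>M) = (\<integral>\<^sup>+z. H z \<partial>distr M (N \<Otimes>\<^sub>M N') (\<lambda>\<omega>. (X \<omega>, Y \<omega>)))"
    by (rule nn_integral_distr[symmetric]) (auto intro: measurable_Pair X Y H)
  also have "distr M (N \<Otimes>\<^sub>M N') (\<lambda>\<omega>. (X \<omega>, Y \<omega>)) = distr M N X \<Otimes>\<^sub>M distr M N' Y"
    using indep by (simp add: indep_var_distribution_eq)
  also have "(\<integral>\<^sup>+z. H z \<partial>(distr M N X \<Otimes>\<^sub>M distr M N' Y))
      = (\<integral>\<^sup>+a. \<integral>\<^sup>+b. H (a, b) \<partial>distr M N' Y \<partial>distr M N X)"
  proof (rule Y.nn_integral_fst[symmetric])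
    have "sets (distr M N X \<Otimes>\<^sub>M distr M N' Y) = sets (N \<Otimes>\<^sub>M N')"
      by (intro sets_pair_measure_cong) simp_all
    thus "H \<in> borel_measurable (distr M N X \<Otimes>\<^sub>M distr M N' Y)"
      using H measurable_cong_sets[OF _ refl] by blast
  qed
  also have "\<dots> \<le> (\<integral>\<^sup>+a. G a \<partial>distr M N X)"
  proof (rule nn_integral_mono)
    fix a assume "a \<in> space (distr M N X)"
    hence a: "a \<in> space N" by simp
    have "(\<integral>\<^sup>+b. H (a, b) \<partial>distr M N' Y) = (\<integral>\<^sup>+\<omega>. H (a, Y \<omega>) \<partial>M)"
      by (rule nn_integral_distr[OF Y]) (simp add: measurable_Pair2[OF H a])
    thus "(\<integral>\<^sup>+b. H (a, b) \<partial>distr M N' Y) \<le> G a" using le[OF a] by simp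
  qed
  also have "\<dots> = (\<integral>\<^sup>+\<omega>. G (X \<omega>) \<partial>M)"
    by (rule nn_integral_distr[OF X]) (simp add: G)
  finally show ?thesis .
qed

lemma integrable_nonneg_nn_integral_le:
  fixes f g :: "'a \<Rightarrow> real"
  assumes f: "f \<in> borel_measurable M" "\<And>\<omega>. 0 \<le> f \<omega>"
    and g: "integrable M g" "\<And>\<omega>. 0 \<le> g \<omega>"
    and le: "(\<integral>\<^sup>+\<omega>. ennreal (f \<omega>) \<partial>M) \<le> (\<integral>\<^sup>+\<omega>. ennreal (g \<omega>) \<partial>M)"
  shows "integrable M f" "integral\<^sup>L M f \<le> integral\<^sup>L M g"
proof -
  have g_eq: "(\<integral>\<^sup>+\<omega>. ennreal (g \<omega>) \<partial>M) = ennreal (integral\<^sup>L M g)"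
    using g by (intro nn_integral_eq_integral) auto
  hence "(\<integral>\<^sup>+\<omega>. ennreal (f \<omega>) \<partial>M) < \<infinity>" using le by (simp add: le_less_trans)
  thus int_f: "integrable M f" using f by (intro integrableI_nonneg) auto
  have "ennreal (integral\<^sup>L M f) = (\<integral>\<^sup>+\<omega>. ennreal (f \<omega>) \<partial>M)"
    using int_f f by (intro nn_integral_eq_integral[symmetric]) auto
  with le g_eq have "ennreal (integral\<^sup>L M f) \<le> ennreal (integral\<^sup>L M g)" by simp
  thus "integral\<^sup>L M f \<le> integral\<^sup>L M g"
    using g by (simp add: ennreal_le_iff integral_nonneg_AE)
qed

end

section \<open>The perturbed descent recursion\<close>

lemma weighted_descent_telescope:
  fixes \<delta> b :: "nat \<Rightarrow> real" and a \<Delta> :: real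
  assumes a: "0 \<le> a" and rec: "\<And>k. \<delta> (Suc k) + b k \<le> (1 + a) * \<delta> k + a * \<Delta>"
  shows "(\<Sum>k<N. b k / (1 + a) ^ Suc k) + \<delta> N / (1 + a) ^ N
           \<le> \<delta> 0 + a * \<Delta> * (\<Sum>k<N. 1 / (1 + a) ^ Suc k)"
proof (induction N)
  case (Suc N)
  have pos: "(1 + a) ^ Suc N > 0" using a by simp
  have "(\<delta> (Suc N) + b N) / (1 + a) ^ Suc N \<le> ((1 + a) * \<delta> N + a * \<Delta>) / (1 + a) ^ Suc N"
    using rec[of N] pos by (simp add: divide_right_mono)
  also have "\<dots> = \<delta> N / (1 + a) ^ N + a * \<Delta> / (1 + a) ^ Suc N"
    using a by (simp add: add_divide_distrib)
  finally show ?case using Suc.IH by (simp add: add_divide_distrib algebra_simps)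
qed simp

lemma one_plus_power_le_three:
  fixes a :: real
  assumes "0 \<le> a" "a * real K \<le> 1"
  shows "(1 + a) ^ K \<le> 3"
proof -
  have "(1 + a) ^ K \<le> exp a ^ K" using assms by (intro power_mono) auto
  also have "\<dots> = exp (a * real K)" by (simp add: exp_of_nat_mult[symmetric] mult.commute)
  also have "\<dots> \<le> exp 1" using assms by simp
  also have "\<dots> \<le> 3" by (rule exp_le)
  finally show ?thesis .
qed

lemma Min_le_of_descent_recursion:
  fixes \<delta> t :: "nat \<Rightarrow> real" and a c \<epsilon> \<Delta> :: real and K :: nat
  assumes a: "0 \<le> a" "a * real K \<le> 1" and K: "K \<ge> 1" and c: "c > 0" and \<epsilon>: "\<epsilon> > 0"
    and \<delta>_nonneg: "\<And>k. 0 \<le> \<delta> k"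
    and rec: "\<And>k. \<delta> (Suc k) + c / 2 * t k \<le> (1 + a) * \<delta> k + a * \<Delta>"
    and bias: "a * \<Delta> \<le> \<epsilon>\<^sup>2 * c / 4"
    and K_large: "real K \<ge> 12 * \<delta> 0 / (c * \<epsilon>\<^sup>2)"
  shows "Min (t ` {0..<K}) \<le> \<epsilon>\<^sup>2"
proof -
  define m where "m = Min (t ` {0..<K})"
  define w where "w k = 1 / (1 + a) ^ Suc k" for k
  define W where "W = (\<Sum>k<K. w k)"
  have w_pos: "w k > 0" for k using a by (simp add: w_def)
  have "w k \<ge> 1 / 3" if "k < K" for k
  proof -
    have "(1 + a) ^ Suc k \<le> (1 + a) ^ K" using a that by (intro power_increasing) auto
    also have "\<dots> \<le> 3" by (rule one_plus_power_le_three[OF a])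
    finally have "(1 + a) ^ Suc k \<le> 3" .
    from le_imp_inverse_le[OF this] show ?thesis using a by (simp add: w_def inverse_eq_divide)
  qed
  hence KW: "real K / 3 \<le> W" unfolding W_def using sum_mono[of "{..<K}" "\<lambda>_. 1 / 3" w] by simp
  hence W: "W > 0" using K by simp
  have "c / 2 * m * W = (\<Sum>k<K. c / 2 * m * w k)" by (simp add: W_def sum_distrib_left)
  also have "\<dots> \<le> (\<Sum>k<K. c / 2 * t k * w k)"
    using w_pos c by (intro sum_mono mult_right_mono mult_left_mono) (auto simp: m_def less_imp_le)
  also have "\<dots> \<le> \<delta> 0 + a * \<Delta> * W - \<delta> K / (1 + a) ^ K"
    using weighted_descent_telescope[where b="\<lambda>k. c / 2 * t k", OF a(1) rec, of K] by (simp add: W_def w_def)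
  also have "\<dots> \<le> \<delta> 0 + a * \<Delta> * W" using \<delta>_nonneg[of K] a by simp
  finally have "c / 2 * m \<le> \<delta> 0 / W + a * \<Delta>" using W by (simp add: field_simps)
  also have "\<delta> 0 / W \<le> \<delta> 0 / (real K / 3)"
    using KW K \<delta>_nonneg[of 0] by (intro divide_left_mono) auto
  also have "\<delta> 0 / (real K / 3) \<le> 1 / 4 * (c * \<epsilon>\<^sup>2)"
    using K_large K c \<epsilon> by (simp add: field_simps)
  finally have "c / 2 * m \<le> c / 2 * \<epsilon>\<^sup>2" using bias by (simp add: algebra_simps)
  thus ?thesis using c by (simp add: m_def)
qed

section \<open>Det-CGD\<close>

lemma matrix_smooth_gradient_bound:
  assumes smooth: "matrix_smooth S h gh" and lb: "\<And>z. hinf \<le> h z" and w: "S *v w = gh y"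
  shows "w \<bullet> gh y \<le> 2 * (h y - hinf)"
proof -
  have "h (y - w) \<le> h y + gh y \<bullet> ((y - w) - y) + 1/2 * ((S *v ((y - w) - y)) \<bullet> ((y - w) - y))"
    using smooth unfolding matrix_smooth_def by blast
  also have "\<dots> = h y - 1/2 * (w \<bullet> gh y)"
    using w by (simp add: vec.neg inner_commute)
  finally show ?thesis using lb[of "y - w"] by simp
qed

locale det_cgd =
  fixes n :: nat and fs :: "nat \<Rightarrow> real^'d \<Rightarrow> real" and g :: "nat \<Rightarrow> real^'d \<Rightarrow> real^'d"
    and f :: "real^'d \<Rightarrow> real" and finf :: real and fsinf :: "nat \<Rightarrow> real"
    and Ls :: "nat \<Rightarrow> real^'d^'d" and L D :: "real^'d^'d"
    and M :: "'a measure" and \<mu> :: "(real^'d^'d) measure"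
    and T :: "nat \<Rightarrow> nat \<Rightarrow> 'a \<Rightarrow> real^'d^'d"
    and x :: "nat \<Rightarrow> 'a \<Rightarrow> real^'d" and x0 :: "real^'d"
    and gradf :: "real^'d \<Rightarrow> real^'d"
  assumes n_pos: "n \<ge> 1"
    and f_def: "f = (\<lambda>y. (1 / real n) * (\<Sum>i<n. fs i y))"
    and gradf_def: "gradf = (\<lambda>y. (1 / real n) *\<^sub>R (\<Sum>i<n. g i y))"
    and grad: "\<And>i y. i < n \<Longrightarrow> (fs i has_derivative (\<lambda>h. g i y \<bullet> h)) (at y)"
    and fi_lb: "\<And>i y. i < n \<Longrightarrow> fsinf i \<le> fs i y"
    and Li_pd: "\<And>i. i < n \<Longrightarrow> pd (Ls i)"
    and fi_smooth: "\<And>i. i < n \<Longrightarrow> matrix_smooth (Ls i) (fs i) (g i)"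
    and f_lb: "\<And>y. finf \<le> f y"
    and L_psd: "psd L"
    and f_smooth: "matrix_smooth L f gradf"
    and prob: "prob_space M"
    and T_meas: "\<And>k i. i < n \<Longrightarrow> T k i \<in> borel_measurable M"
    and T_indep: "prob_space.indep_vars M (\<lambda>_. borel) (\<lambda>(k, i). T k i) (UNIV \<times> {..<n})"
    and T_distr: "\<And>k i. i < n \<Longrightarrow> distr M borel (T k i) = \<mu>"
    and T_psd: "\<And>k i. i < n \<Longrightarrow> AE \<omega> in M. psd (T k i \<omega>)"
    and T_int: "\<And>k i. i < n \<Longrightarrow> integrable M (T k i)"
    and T_mean: "\<And>k i. i < n \<Longrightarrow> integral\<^sup>L M (T k i) = mat 1"
    and D_pd: "pd D"
    and x_0: "\<And>\<omega>. x 0 \<omega> = x0"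
    and x_Suc: "\<And>k \<omega>. x (Suc k) \<omega> =
         x k \<omega> - (1 / real n) *\<^sub>R (\<Sum>i<n. T k i \<omega> *v (D *v g i (x k \<omega>)))"
    and int_lam: "\<And>i. i < n \<Longrightarrow> integrable \<mu> (\<lambda>A.
                 msqrt (Ls i) ** D ** (A - mat 1) ** L ** (A - mat 1) ** D ** msqrt (Ls i))"
    and DLD: "loewner_le (D ** L ** D) D"
begin

sublocale prob_space M by (rule prob)

definition noise_matrix :: "nat \<Rightarrow> real^'d^'d \<Rightarrow> real^'d^'d" where
  "noise_matrix i A = msqrt (Ls i) ** D ** (A - mat 1) ** L ** (A - mat 1) ** D ** msqrt (Ls i)"

definition lam :: "nat \<Rightarrow> real" where
  "lam i = lambda_max (integral\<^sup>L \<mu> (noise_matrix i))"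

definition lamD :: real where
  "lamD = Max (lam ` {..<n})"

definition fsinf_mean :: real where
  "fsinf_mean = (1 / real n) * (\<Sum>i<n. fsinf i)"

definition noise :: "nat \<Rightarrow> real^'d \<Rightarrow> nat \<Rightarrow> 'a \<Rightarrow> real^'d" where
  "noise k y i \<omega> = (T k i \<omega> - mat 1) *v (D *v g i y)"

definition step :: "nat \<Rightarrow> real^'d \<Rightarrow> 'a \<Rightarrow> real^'d" where
  "step k y \<omega> = (1 / real n) *\<^sub>R (\<Sum>i<n. T k i \<omega> *v (D *v g i y))"

definition descent_bound :: "real^'d \<Rightarrow> real" where
  "descent_bound y = (f y - finf) + lamD / real n * (f y - fsinf_mean) - 1/2 * (gradf y \<bullet> (D *v gradf y))"

lemma n_gt_0: "real n > 0"
  using n_pos by simp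

lemma D_sym: "transpose D = D"
  using D_pd by (simp add: pd_def)

lemma L_sym: "transpose L = L"
  using L_psd by (simp add: psd_def)

lemma Ls_sqrt:
  assumes "i < n"
  shows "transpose (msqrt (Ls i)) = msqrt (Ls i)" "msqrt (Ls i) ** msqrt (Ls i) = Ls i"
  using msqrt[OF pd_imp_psd[OF Li_pd[OF assms]]] by (auto simp: psd_def)

lemma T_sym_AE: "i < n \<Longrightarrow> AE \<omega> in M. transpose (T k i \<omega>) = T k i \<omega>"
  using T_psd[of i k] by (auto simp: psd_def elim!: AE_mp)

lemma borel_measurable_T_comp:
  "continuous_on UNIV h \<Longrightarrow> i < n \<Longrightarrow> (\<lambda>\<omega>. h (T k i \<omega>)) \<in> borel_measurable M"
  by (rule borel_measurable_continuous_on[OF _ T_meas])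

lemma noise_matrix_congruence:
  assumes "i < n" "transpose A = A"
  shows "noise_matrix i A = transpose ((A - mat 1) ** D ** msqrt (Ls i)) ** L ** ((A - mat 1) ** D ** msqrt (Ls i))"
  using assms Ls_sqrt(1)[OF assms(1)] D_sym
  by (simp add: noise_matrix_def matrix_transpose_mul transpose_diff matrix_mul_assoc)

lemma quadratic_form_noise_matrix:
  assumes "i < n" "transpose A = A"
  shows "u \<bullet> (noise_matrix i A *v u) =
    (L *v ((A - mat 1) *v (D *v (msqrt (Ls i) *v u)))) \<bullet> ((A - mat 1) *v (D *v (msqrt (Ls i) *v u)))"
  unfolding noise_matrix_congruence[OF assms] quadratic_form_congruence
  by (simp only: matrix_vector_mul_assoc matrix_mul_assoc inner_commute)

lemma borel_measurable_noise_matrix [measurable]: "noise_matrix i \<in> borel_measurable borel"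
  unfolding noise_matrix_def[abs_def] by (intro borel_measurable_continuous_onI continuous_intros)

lemma integrable_noise_matrix: "i < n \<Longrightarrow> integrable M (\<lambda>\<omega>. noise_matrix i (T k i \<omega>))"
  using int_lam[of i] integrable_distr_eq[OF T_meas[of i k] borel_measurable_noise_matrix, of i] T_distr[of i k]
  by (simp add: noise_matrix_def[abs_def])

lemma integral_noise_matrix: "i < n \<Longrightarrow> integral\<^sup>L \<mu> (noise_matrix i) = (\<integral>\<omega>. noise_matrix i (T k i \<omega>) \<partial>M)"
  using integral_distr[OF T_meas[of i k] borel_measurable_noise_matrix, of i] T_distr[of i k] by simp

lemma psd_integral_noise_matrix: "i < n \<Longrightarrow> psd (integral\<^sup>L \<mu> (noise_matrix i))"
  unfolding integral_noise_matrix[of i 0]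
  by (intro integral_psd integrable_noise_matrix)
     (use T_sym_AE[of i 0] in \<open>auto simp: noise_matrix_congruence psd_congruence[OF L_psd] elim!: AE_mp\<close>)

lemma lam_nonneg: "i < n \<Longrightarrow> 0 \<le> lam i"
  unfolding lam_def by (rule lambda_max_nonneg[OF psd_integral_noise_matrix])

lemma lam_le_lamD: "i < n \<Longrightarrow> lam i \<le> lamD"
  unfolding lamD_def by (rule Max_ge) auto

lemma lamD_nonneg: "0 \<le> lamD"
  using lam_nonneg[of 0] lam_le_lamD[of 0] n_pos by auto

lemma noise_integrable:
  assumes "i < n"
  shows "integrable M (noise k y i)" "integral\<^sup>L M (noise k y i) = 0"
proof -
  have eq: "noise k y i \<omega> = T k i \<omega> *v (D *v g i y) - D *v g i y" for \<omega>
    by (simp add: noise_def matrix_vector_mult_diff_rdistrib)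
  show "integrable M (noise k y i)"
    unfolding eq[abs_def] using integral_matrix_vector_mult_left[OF T_int[OF assms]] by simp
  show "integral\<^sup>L M (noise k y i) = 0"
    unfolding eq[abs_def] using integral_matrix_vector_mult_left[OF T_int[OF assms]] T_mean[OF assms]
    by (simp add: prob_space)
qed

lemma indep_T_pair:
  assumes "i < n" "j < n" "i \<noteq> j"
  shows "indep_var borel (T k i) borel (T k j)"
proof -
  have "indep_var (PiM {(k,i)} (\<lambda>_. borel)) (\<lambda>\<omega>. restrict (\<lambda>p. (\<lambda>(k, i). T k i) p \<omega>) {(k,i)})
                  (PiM {(k,j)} (\<lambda>_. borel)) (\<lambda>\<omega>. restrict (\<lambda>p. (\<lambda>(k, i). T k i) p \<omega>) {(k,j)})"
    by (rule indep_var_restrict[OF T_indep]) (use assms in auto)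
  from indep_var_compose[OF this measurable_component_singleton[of "(k,i)"] measurable_component_singleton[of "(k,j)"]]
  show ?thesis by (simp add: o_def)
qed

lemma indep_noise:
  assumes "i < n" "j < n" "i \<noteq> j"
  shows "indep_var borel (noise k y i) borel (noise k y j)"
  using indep_var_compose[OF indep_T_pair[OF assms], of "\<lambda>A. (A - mat 1) *v (D *v g i y)" borel
      "\<lambda>A. (A - mat 1) *v (D *v g j y)" borel]
  by (simp add: noise_def[abs_def] o_def borel_measurable_continuous_onI continuous_intros)

lemma noise_quadratic_bound:
  assumes i: "i < n"
  shows "integrable M (\<lambda>\<omega>. (L *v noise k y i \<omega>) \<bullet> noise k y i \<omega>)"
    and "(\<integral>\<omega>. (L *v noise k y i \<omega>) \<bullet> noise k y i \<omega> \<partial>M) \<le> lam i * (2 * (fs i y - fsinf i))"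
proof -
  let ?R = "msqrt (Ls i)"
  obtain w where w: "Ls i *v w = g i y" using pd_surj[OF Li_pd[OF i]] by (metis surjD)
  define u where "u = ?R *v w"
  have Ru: "?R *v u = g i y" using Ls_sqrt(2)[OF i] w by (simp add: u_def matrix_vector_mul_assoc)
  define q where "q A = u \<bullet> (noise_matrix i A *v u)" for A
  have AE_eq: "AE \<omega> in M. (L *v noise k y i \<omega>) \<bullet> noise k y i \<omega> = q (T k i \<omega>)"
    using T_sym_AE[OF i, of k]
    by (auto simp: q_def noise_def quadratic_form_noise_matrix[OF i] Ru elim!: AE_mp)
  have int_q: "integrable M (\<lambda>\<omega>. q (T k i \<omega>))"
    unfolding q_def using integral_matrix_vector_mult_left[OF integrable_noise_matrix[OF i]] by simp
  have meas: "(\<lambda>\<omega>. (L *v noise k y i \<omega>) \<bullet> noise k y i \<omega>) \<in> borel_measurable M"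
    unfolding noise_def using i by (intro borel_measurable_T_comp[where h="\<lambda>A. (L *v ((A - mat 1) *v (D *v g i y))) \<bullet> ((A - mat 1) *v (D *v g i y))"] continuous_intros)
  show int: "integrable M (\<lambda>\<omega>. (L *v noise k y i \<omega>) \<bullet> noise k y i \<omega>)"
    using integrable_cong_AE_imp[OF int_q meas] AE_eq by (simp add: eq_commute)
  have "(\<integral>\<omega>. (L *v noise k y i \<omega>) \<bullet> noise k y i \<omega> \<partial>M) = (\<integral>\<omega>. q (T k i \<omega>) \<partial>M)"
    using AE_eq int int_q by (intro integral_cong_AE) auto
  also have "\<dots> = u \<bullet> (integral\<^sup>L \<mu> (noise_matrix i) *v u)"
    unfolding q_def integral_noise_matrix[OF i, of k]
    using integral_matrix_vector_mult_left[OF integrable_noise_matrix[OF i]] by simp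
  also have "\<dots> \<le> lam i * (u \<bullet> u)"
    unfolding lam_def using psd_integral_noise_matrix[OF i]
    by (intro quadratic_form_le_lambda_max) (simp add: psd_def)
  also have "u \<bullet> u = w \<bullet> g i y"
    using inner_symmetric_matrix[OF Ls_sqrt(1)[OF i], of w u] Ru by (simp add: u_def)
  also have "lam i * (w \<bullet> g i y) \<le> lam i * (2 * (fs i y - fsinf i))"
    using matrix_smooth_gradient_bound[OF fi_smooth[OF i] fi_lb[OF i] w] lam_nonneg[OF i]
    by (rule mult_left_mono)
  finally show "(\<integral>\<omega>. (L *v noise k y i \<omega>) \<bullet> noise k y i \<omega> \<partial>M) \<le> lam i * (2 * (fs i y - fsinf i))" .
qed

lemma step_eq: "step k y \<omega> = D *v gradf y + (1 / real n) *\<^sub>R (\<Sum>i<n. noise k y i \<omega>)"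
proof -
  have "T k i \<omega> *v (D *v g i y) = D *v g i y + noise k y i \<omega>" for i
    by (simp add: noise_def matrix_vector_mult_diff_rdistrib)
  hence "(\<Sum>i<n. T k i \<omega> *v (D *v g i y)) = (\<Sum>i<n. D *v g i y) + (\<Sum>i<n. noise k y i \<omega>)"
    by (simp add: sum.distrib)
  moreover have "(1 / real n) *\<^sub>R (\<Sum>i<n. D *v g i y) = D *v gradf y"
    by (simp add: gradf_def matrix_vector_mult_scaleR vec.sum)
  ultimately show ?thesis by (simp add: step_def scaleR_add_right)
qed

lemma noise_sum_integrable:
  shows "integrable M (\<lambda>\<omega>. \<Sum>i<n. noise k y i \<omega>)" "(\<integral>\<omega>. (\<Sum>i<n. noise k y i \<omega>) \<partial>M) = 0"
  using noise_integrable
  by (auto intro!: Bochner_Integration.integrable_sum simp: Bochner_Integration.integral_sum)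

lemma step_integrable:
  shows "integrable M (step k y)" "integral\<^sup>L M (step k y) = D *v gradf y"
  using noise_sum_integrable[of k y] by (simp_all add: step_eq[abs_def] prob_space)

lemma noise_sum_quadratic_bound:
  shows "integrable M (\<lambda>\<omega>. (L *v (\<Sum>i<n. noise k y i \<omega>)) \<bullet> (\<Sum>i<n. noise k y i \<omega>))"
    and "(\<integral>\<omega>. (L *v (\<Sum>i<n. noise k y i \<omega>)) \<bullet> (\<Sum>i<n. noise k y i \<omega>) \<partial>M)
           \<le> 2 * lamD * real n * (f y - fsinf_mean)"
proof -
  show "integrable M (\<lambda>\<omega>. (L *v (\<Sum>i<n. noise k y i \<omega>)) \<bullet> (\<Sum>i<n. noise k y i \<omega>))"
    by (intro integral_quadratic_form_sum_indep indep_noise noise_integrable noise_quadratic_bound) simp_all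
  have "(\<integral>\<omega>. (L *v (\<Sum>i<n. noise k y i \<omega>)) \<bullet> (\<Sum>i<n. noise k y i \<omega>) \<partial>M)
      = (\<Sum>i<n. \<integral>\<omega>. (L *v noise k y i \<omega>) \<bullet> noise k y i \<omega> \<partial>M)"
    by (intro integral_quadratic_form_sum_indep indep_noise noise_integrable noise_quadratic_bound) simp_all
  also have "\<dots> \<le> (\<Sum>i<n. lamD * (2 * (fs i y - fsinf i)))"
  proof (rule sum_mono)
    fix i assume "i \<in> {..<n}"
    hence i: "i < n" by simp
    have "(\<integral>\<omega>. (L *v noise k y i \<omega>) \<bullet> noise k y i \<omega> \<partial>M) \<le> lam i * (2 * (fs i y - fsinf i))"
      by (rule noise_quadratic_bound(2)[OF i])
    also have "\<dots> \<le> lamD * (2 * (fs i y - fsinf i))"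
      using lam_le_lamD[OF i] fi_lb[OF i, of y] by (intro mult_right_mono) auto
    finally show "(\<integral>\<omega>. (L *v noise k y i \<omega>) \<bullet> noise k y i \<omega> \<partial>M) \<le> lamD * (2 * (fs i y - fsinf i))" .
  qed
  also have "\<dots> = 2 * lamD * (\<Sum>i<n. fs i y - fsinf i)"
    unfolding sum_distrib_left by (rule sum.cong) simp_all
  also have "\<dots> = 2 * lamD * real n * (f y - fsinf_mean)"
    using n_gt_0 by (simp add: f_def fsinf_mean_def sum_subtractf algebra_simps)
  finally show "(\<integral>\<omega>. (L *v (\<Sum>i<n. noise k y i \<omega>)) \<bullet> (\<Sum>i<n. noise k y i \<omega>) \<partial>M)
           \<le> 2 * lamD * real n * (f y - fsinf_mean)" .
qed

lemma step_quadratic_bound: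
  shows "integrable M (\<lambda>\<omega>. (L *v step k y \<omega>) \<bullet> step k y \<omega>)"
    and "(\<integral>\<omega>. (L *v step k y \<omega>) \<bullet> step k y \<omega> \<partial>M)
           \<le> gradf y \<bullet> (D *v gradf y) + 2 * lamD / real n * (f y - fsinf_mean)"
proof -
  define m where "m = D *v gradf y"
  define S where "S \<omega> = (\<Sum>i<n. noise k y i \<omega>)" for \<omega>
  have eq: "(L *v step k y \<omega>) \<bullet> step k y \<omega> =
      (L *v m) \<bullet> m + 2 / real n * ((L *v m) \<bullet> S \<omega>) + 1 / (real n)\<^sup>2 * ((L *v S \<omega>) \<bullet> S \<omega>)" for \<omega>
    unfolding step_eq quadratic_form_add[OF L_sym]
    by (simp add: m_def S_def matrix_vector_mult_scaleR power2_eq_square)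
  note S = noise_sum_integrable[of k y, folded S_def]
  note SS = noise_sum_quadratic_bound[of k y, folded S_def]
  show "integrable M (\<lambda>\<omega>. (L *v step k y \<omega>) \<bullet> step k y \<omega>)"
    unfolding eq using S SS by simp
  have "(\<integral>\<omega>. (L *v step k y \<omega>) \<bullet> step k y \<omega> \<partial>M) = (L *v m) \<bullet> m + 1 / (real n)\<^sup>2 * (\<integral>\<omega>. (L *v S \<omega>) \<bullet> S \<omega> \<partial>M)"
    unfolding eq using S SS by (simp add: prob_space)
  also have "\<dots> \<le> gradf y \<bullet> (D *v gradf y) + 1 / (real n)\<^sup>2 * (2 * lamD * real n * (f y - fsinf_mean))"
    using quadratic_form_le_of_loewner_le[OF DLD D_sym] SS(2)
    by (intro add_mono mult_left_mono) (simp_all add: m_def)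
  also have "\<dots> = gradf y \<bullet> (D *v gradf y) + 2 * lamD / real n * (f y - fsinf_mean)"
    using n_gt_0 by (simp add: power2_eq_square)
  finally show "(\<integral>\<omega>. (L *v step k y \<omega>) \<bullet> step k y \<omega> \<partial>M)
           \<le> gradf y \<bullet> (D *v gradf y) + 2 * lamD / real n * (f y - fsinf_mean)" .
qed

lemma one_step_descent:
  shows "(\<integral>\<^sup>+\<omega>. ennreal (f (y - step k y \<omega>) - finf) \<partial>M) \<le> ennreal (descent_bound y)"
    and "0 \<le> descent_bound y"
proof -
  define U where "U \<omega> = (f y - finf) - gradf y \<bullet> step k y \<omega> + 1/2 * ((L *v step k y \<omega>) \<bullet> step k y \<omega>)" for \<omega>
  have le_U: "f (y - step k y \<omega>) - finf \<le> U \<omega>" for \<omega>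
  proof -
    let ?z = "y - step k y \<omega>"
    have "f ?z \<le> f y + gradf y \<bullet> (?z - y) + 1/2 * ((L *v (?z - y)) \<bullet> (?z - y))"
      using f_smooth unfolding matrix_smooth_def by blast
    thus ?thesis by (simp add: U_def vec.neg)
  qed
  have U_nonneg: "0 \<le> U \<omega>" for \<omega>
    using le_U[of \<omega>] f_lb[of "y - step k y \<omega>"] by linarith
  have int_U: "integrable M U"
    unfolding U_def[abs_def] using step_integrable step_quadratic_bound(1) by simp
  have "integral\<^sup>L M U = (f y - finf) - gradf y \<bullet> (D *v gradf y)
      + 1/2 * (\<integral>\<omega>. (L *v step k y \<omega>) \<bullet> step k y \<omega> \<partial>M)"
    unfolding U_def[abs_def] using step_integrable step_quadratic_bound(1) by (simp add: prob_space)
  also have "\<dots> \<le> descent_bound y"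
    using step_quadratic_bound(2)[of k y] by (simp add: descent_bound_def)
  finally have U_le: "integral\<^sup>L M U \<le> descent_bound y" .
  moreover have "0 \<le> integral\<^sup>L M U" using U_nonneg by (simp add: integral_nonneg_AE)
  ultimately show "0 \<le> descent_bound y" by linarith
  have "(\<integral>\<^sup>+\<omega>. ennreal (f (y - step k y \<omega>) - finf) \<partial>M) \<le> (\<integral>\<^sup>+\<omega>. ennreal (U \<omega>) \<partial>M)"
    using le_U by (intro nn_integral_mono ennreal_leI)
  also have "\<dots> = ennreal (integral\<^sup>L M U)"
    using int_U U_nonneg by (intro nn_integral_eq_integral) auto
  finally show "(\<integral>\<^sup>+\<omega>. ennreal (f (y - step k y \<omega>) - finf) \<partial>M) \<le> ennreal (descent_bound y)"
    using U_le ennreal_leI order_trans by blast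
qed

primrec iterate :: "nat \<Rightarrow> (nat \<times> nat \<Rightarrow> real^'d^'d) \<Rightarrow> real^'d" where
  "iterate 0 t = x0"
| "iterate (Suc k) t = iterate k t - (1 / real n) *\<^sub>R (\<Sum>i<n. t (k, i) *v (D *v g i (iterate k t)))"

lemma x_eq_iterate: "x k \<omega> = iterate k (\<lambda>p. case_prod T p \<omega>)"
  by (induction k) (simp_all add: x_0 x_Suc)

lemma iterate_cong:
  "(\<And>p. p \<in> {..<k} \<times> {..<n} \<Longrightarrow> t p = t' p) \<Longrightarrow> iterate k t = iterate k t'"
  by (induction k) auto

lemma g_measurable: "i < n \<Longrightarrow> g i \<in> borel_measurable borel"
  by (rule borel_measurable_gradient[OF grad])

lemma gradf_measurable: "gradf \<in> borel_measurable borel"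
  unfolding gradf_def using g_measurable by (intro borel_measurable_scaleR borel_measurable_sum) auto

lemma f_continuous: "continuous_on UNIV f"
  unfolding f_def using grad
  by (intro continuous_intros) (meson continuous_at_imp_continuous_on has_derivative_continuous lessThan_iff)

lemma descent_bound_measurable: "descent_bound \<in> borel_measurable borel"
  unfolding descent_bound_def[abs_def] using gradf_measurable borel_measurable_continuous_on[OF f_continuous]
  by measurable

lemma update_measurable:
  assumes "Y \<in> borel_measurable N" and "\<And>i. i < n \<Longrightarrow> (\<lambda>w. q w i) \<in> borel_measurable N"
  shows "(\<lambda>w. Y w - (1 / real n) *\<^sub>R (\<Sum>i<n. q w i *v (D *v g i (Y w)))) \<in> borel_measurable N"
  using assms measurable_compose[OF assms(1) g_measurable] by measurable

lemma iterate_measurable: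
  "{..<k} \<times> {..<n} \<subseteq> A \<Longrightarrow> iterate k \<in> borel_measurable (PiM A (\<lambda>_. borel))"
proof (induction k)
  case (Suc k)
  hence "iterate k \<in> borel_measurable (PiM A (\<lambda>_. borel))" by force
  moreover have "(\<lambda>t. t (k, i)) \<in> borel_measurable (PiM A (\<lambda>_. borel))" if "i < n" for i
    using Suc.prems that by (intro measurable_component_singleton) auto
  ultimately have "(\<lambda>t. iterate k t - (1 / real n) *\<^sub>R (\<Sum>i<n. t (k, i) *v (D *v g i (iterate k t))))
      \<in> borel_measurable (PiM A (\<lambda>_. borel))"
    by (rule update_measurable)
  thus ?case by simp
qed (simp add: iterate.simps(1)[abs_def])

lemma x_measurable: "x k \<in> borel_measurable M"
  by (induction k) (simp_all add: x_0 x_Suc[abs_def] update_measurable T_meas)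

definition past :: "nat \<Rightarrow> 'a \<Rightarrow> nat \<times> nat \<Rightarrow> real^'d^'d" where
  "past k \<omega> = restrict (\<lambda>p. case_prod T p \<omega>) ({..<k} \<times> {..<n})"

definition current :: "nat \<Rightarrow> 'a \<Rightarrow> nat \<times> nat \<Rightarrow> real^'d^'d" where
  "current k \<omega> = restrict (\<lambda>p. case_prod T p \<omega>) ({k} \<times> {..<n})"

lemma indep_past_current:
  "indep_var (PiM ({..<k} \<times> {..<n}) (\<lambda>_. borel)) (past k) (PiM ({k} \<times> {..<n}) (\<lambda>_. borel)) (current k)"
  unfolding past_def[abs_def] current_def[abs_def]
  by (rule indep_var_restrict[OF T_indep]) auto

lemma x_eq_past: "x k \<omega> = iterate k (past k \<omega>)"
  unfolding x_eq_iterate past_def by (rule iterate_cong) simp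

lemma expected_next_le:
  "(\<integral>\<^sup>+\<omega>. ennreal (f (x (Suc k) \<omega>) - finf) \<partial>M) \<le> (\<integral>\<^sup>+\<omega>. ennreal (descent_bound (x k \<omega>)) \<partial>M)"
proof -
  let ?A = "PiM ({..<k} \<times> {..<n}) (\<lambda>_. borel :: (real^'d^'d) measure)"
  let ?B = "PiM ({k} \<times> {..<n}) (\<lambda>_. borel :: (real^'d^'d) measure)"
  define upd where "upd z = iterate k (fst z) - (1 / real n) *\<^sub>R (\<Sum>i<n. snd z (k, i) *v (D *v g i (iterate k (fst z))))"
    for z :: "(nat \<times> nat \<Rightarrow> real^'d^'d) \<times> (nat \<times> nat \<Rightarrow> real^'d^'d)"
  define H where "H z = ennreal (f (upd z) - finf)" for z
  define G where "G p = ennreal (descent_bound (iterate k p))" for p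
  have "upd \<in> borel_measurable (?A \<Otimes>\<^sub>M ?B)"
    unfolding upd_def
    by (intro update_measurable measurable_compose[OF measurable_fst iterate_measurable]
        measurable_compose[OF measurable_snd measurable_component_singleton]) auto
  hence H: "H \<in> borel_measurable (?A \<Otimes>\<^sub>M ?B)"
    unfolding H_def using borel_measurable_continuous_on[OF f_continuous] by measurable
  have G: "G \<in> borel_measurable ?A"
    unfolding G_def using iterate_measurable[of k] descent_bound_measurable by measurable
  have "(\<integral>\<^sup>+\<omega>. ennreal (f (x (Suc k) \<omega>) - finf) \<partial>M) = (\<integral>\<^sup>+\<omega>. H (past k \<omega>, current k \<omega>) \<partial>M)"
    by (simp add: H_def upd_def x_Suc x_eq_past[of k] current_def)
  also have "\<dots> \<le> (\<integral>\<^sup>+\<omega>. G (past k \<omega>) \<partial>M)"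
  proof (rule nn_integral_indep_var_le[OF indep_past_current H G])
    fix p
    have "(\<integral>\<^sup>+\<omega>. H (p, current k \<omega>) \<partial>M) = (\<integral>\<^sup>+\<omega>. ennreal (f (iterate k p - step k (iterate k p) \<omega>) - finf) \<partial>M)"
      by (simp add: H_def upd_def current_def step_def)
    also have "\<dots> \<le> G p" unfolding G_def by (rule one_step_descent(1))
    finally show "(\<integral>\<^sup>+\<omega>. H (p, current k \<omega>) \<partial>M) \<le> G p" .
  qed
  also have "\<dots> = (\<integral>\<^sup>+\<omega>. ennreal (descent_bound (x k \<omega>)) \<partial>M)"
    by (simp add: G_def x_eq_past)
  finally show ?thesis .
qed

lemma expected_descent:
  assumes int_G: "integrable M (\<lambda>\<omega>. gradf (x k \<omega>) \<bullet> (D *v gradf (x k \<omega>)))"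
    and int_f: "integrable M (\<lambda>\<omega>. f (x k \<omega>) - finf)"
  shows "integrable M (\<lambda>\<omega>. f (x (Suc k) \<omega>) - finf)"
    and "(\<integral>\<omega>. f (x (Suc k) \<omega>) - finf \<partial>M) + 1/2 * (\<integral>\<omega>. gradf (x k \<omega>) \<bullet> (D *v gradf (x k \<omega>)) \<partial>M)
          \<le> (1 + lamD / real n) * (\<integral>\<omega>. f (x k \<omega>) - finf \<partial>M) + lamD / real n * (finf - fsinf_mean)"
proof -
  have bound_eq: "descent_bound (x k \<omega>) = (1 + lamD / real n) * (f (x k \<omega>) - finf)
      + lamD / real n * (finf - fsinf_mean) - 1/2 * (gradf (x k \<omega>) \<bullet> (D *v gradf (x k \<omega>)))" for \<omega>
    using n_gt_0 by (simp add: descent_bound_def field_simps)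
  have int_bound: "integrable M (\<lambda>\<omega>. descent_bound (x k \<omega>))"
    unfolding bound_eq using int_G int_f by simp
  have meas: "(\<lambda>\<omega>. f (x (Suc k) \<omega>) - finf) \<in> borel_measurable M"
    using x_measurable borel_measurable_continuous_on[OF f_continuous] by measurable
  have nonneg: "\<And>\<omega>. 0 \<le> f (x (Suc k) \<omega>) - finf" using f_lb by simp
  note next_le = integrable_nonneg_nn_integral_le[OF meas nonneg int_bound one_step_descent(2) expected_next_le]
  show "integrable M (\<lambda>\<omega>. f (x (Suc k) \<omega>) - finf)" by (rule next_le(1))
  have "(\<integral>\<omega>. f (x (Suc k) \<omega>) - finf \<partial>M) \<le> (\<integral>\<omega>. descent_bound (x k \<omega>) \<partial>M)" by (rule next_le(2))
  also have "\<dots> = (1 + lamD / real n) * (\<integral>\<omega>. f (x k \<omega>) - finf \<partial>M) + lamD / real n * (finf - fsinf_mean)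
      - 1/2 * (\<integral>\<omega>. gradf (x k \<omega>) \<bullet> (D *v gradf (x k \<omega>)) \<partial>M)"
    unfolding bound_eq using int_G int_f by (simp add: prob_space)
  finally show "(\<integral>\<omega>. f (x (Suc k) \<omega>) - finf \<partial>M) + 1/2 * (\<integral>\<omega>. gradf (x k \<omega>) \<bullet> (D *v gradf (x k \<omega>)) \<partial>M)
          \<le> (1 + lamD / real n) * (\<integral>\<omega>. f (x k \<omega>) - finf \<partial>M) + lamD / real n * (finf - fsinf_mean)"
    by simp
qed

lemma integrable_f_iterate:
  assumes "\<And>k. integrable M (\<lambda>\<omega>. gradf (x k \<omega>) \<bullet> (D *v gradf (x k \<omega>)))"
  shows "integrable M (\<lambda>\<omega>. f (x k \<omega>) - finf)"
  by (induction k) (simp_all add: x_0 expected_descent(1)[OF assms])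

lemma min_expected_gradient_norm_le:
  fixes c \<epsilon> :: real and K :: nat
  assumes int_G: "\<And>k. integrable M (\<lambda>\<omega>. gradf (x k \<omega>) \<bullet> (D *v gradf (x k \<omega>)))"
    and c: "c > 0" and \<epsilon>: "\<epsilon> > 0" and K: "K \<ge> 1"
    and lam_K: "lamD \<le> real n / real K"
    and lam_Delta: "4 * (finf - fsinf_mean) * lamD \<le> real n * \<epsilon>\<^sup>2 * c"
    and K_large: "real K \<ge> 12 * (f x0 - finf) / (c * \<epsilon>\<^sup>2)"
  shows "Min ((\<lambda>k. (\<integral>\<omega>. gradf (x k \<omega>) \<bullet> (D *v gradf (x k \<omega>)) \<partial>M) / c) ` {0..<K}) \<le> \<epsilon>\<^sup>2"
proof -
  define \<delta> where "\<delta> k = (\<integral>\<omega>. f (x k \<omega>) - finf \<partial>M)" for k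
  define t where "t k = (\<integral>\<omega>. gradf (x k \<omega>) \<bullet> (D *v gradf (x k \<omega>)) \<partial>M) / c" for k
  have rec: "\<delta> (Suc k) + c / 2 * t k \<le> (1 + lamD / real n) * \<delta> k + lamD / real n * (finf - fsinf_mean)" for k
    using expected_descent(2)[OF int_G integrable_f_iterate[OF int_G]] c unfolding \<delta>_def t_def by simp
  have \<delta>_nonneg: "0 \<le> \<delta> k" for k unfolding \<delta>_def using f_lb by (simp add: integral_nonneg_AE)
  have \<delta>_0: "\<delta> 0 = f x0 - finf" unfolding \<delta>_def by (simp add: x_0 prob_space)
  have a: "0 \<le> lamD / real n" "lamD / real n * real K \<le> 1"
    using lamD_nonneg lam_K K n_gt_0 by (simp_all add: field_simps)
  have bias: "lamD / real n * (finf - fsinf_mean) \<le> \<epsilon>\<^sup>2 * c / 4"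
    using lam_Delta n_gt_0 by (simp add: field_simps)
  show ?thesis
    using Min_le_of_descent_recursion[where \<delta>=\<delta> and t=t, OF a K c \<epsilon> \<delta>_nonneg rec bias] K_large \<delta>_0
    by (simp add: t_def)
qed

end

theorem corollary3:
  fixes n :: nat and K :: nat
    and fs :: "nat \<Rightarrow> real^'d \<Rightarrow> real" and g :: "nat \<Rightarrow> real^'d \<Rightarrow> real^'d"
    and f :: "real^'d \<Rightarrow> real"
    and finf :: real and fsinf :: "nat \<Rightarrow> real"
    and Ls :: "nat \<Rightarrow> real^'d^'d" and L D :: "real^'d^'d"
    and M :: "'a measure" and \<mu> :: "(real^'d^'d) measure"
    and T :: "nat \<Rightarrow> nat \<Rightarrow> 'a \<Rightarrow> real^'d^'d"
    and x :: "nat \<Rightarrow> 'a \<Rightarrow> real^'d" and x0 :: "real^'d"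
    and \<epsilon> :: real and c :: real and gradf :: "real^'d \<Rightarrow> real^'d"
    and Deltainf lamD :: real
  defines "c \<equiv> det D powr (1 / real CARD('d))"
      and "gradf \<equiv> (\<lambda>y. (1 / real n) *\<^sub>R (\<Sum>i<n. g i y))"
      and "Deltainf \<equiv> finf - (1 / real n) * (\<Sum>i<n. fsinf i)"
      and "lamD \<equiv> Max ((\<lambda>i. lambda_max (integral\<^sup>L \<mu> (\<lambda>A.
                 msqrt (Ls i) ** D ** (A - mat 1) ** L ** (A - mat 1) ** D ** msqrt (Ls i)))) ` {..<n})"
  assumes n_pos: "n \<ge> 1"
    and f_def: "f = (\<lambda>y. (1 / real n) * (\<Sum>i<n. fs i y))"
    and grad: "\<And>i y. i < n \<Longrightarrow> (fs i has_derivative (\<lambda>h. g i y \<bullet> h)) (at y)"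
    and fi_lb: "\<And>i y. i < n \<Longrightarrow> fsinf i \<le> fs i y"
    and Li_pd: "\<And>i. i < n \<Longrightarrow> pd (Ls i)"
    and fi_smooth: "\<And>i. i < n \<Longrightarrow> matrix_smooth (Ls i) (fs i) (g i)"
    and f_lb: "\<And>y. finf \<le> f y"
    and L_psd: "psd L"
    and f_smooth: "matrix_smooth L f gradf"
    and prob: "prob_space M"
    and T_meas: "\<And>k i. i < n \<Longrightarrow> T k i \<in> borel_measurable M"
    and T_indep: "prob_space.indep_vars M (\<lambda>_. borel) (\<lambda>(k, i). T k i) (UNIV \<times> {..<n})"
    and T_distr: "\<And>k i. i < n \<Longrightarrow> distr M borel (T k i) = \<mu>"
    and T_psd: "\<And>k i. i < n \<Longrightarrow> AE \<omega> in M. psd (T k i \<omega>)"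
    and T_int: "\<And>k i. i < n \<Longrightarrow> integrable M (T k i)"
    and T_mean: "\<And>k i. i < n \<Longrightarrow> integral\<^sup>L M (T k i) = mat 1"
    and D_pd: "pd D"
    and x_0: "\<And>\<omega>. x 0 \<omega> = x0"
    and x_Suc: "\<And>k \<omega>. x (Suc k) \<omega> =
         x k \<omega> - (1 / real n) *\<^sub>R (\<Sum>i<n. T k i \<omega> *v (D *v g i (x k \<omega>)))"
    and int_lam: "\<And>i. i < n \<Longrightarrow> integrable \<mu> (\<lambda>A.
                 msqrt (Ls i) ** D ** (A - mat 1) ** L ** (A - mat 1) ** D ** msqrt (Ls i))"
    and int_norm: "\<And>k. integrable M (\<lambda>\<omega>. ((inverse c *\<^sub>R D) *v gradf (x k \<omega>)) \<bullet> gradf (x k \<omega>))"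
    and eps_pos: "\<epsilon> > 0"
    and K_pos: "K \<ge> 1"
    and DLD: "loewner_le (D ** L ** D) D"
    and lam_K: "lamD \<le> real n / real K"
    and lam_Delta: "4 * Deltainf * lamD \<le> real n * \<epsilon>\<^sup>2 * c"
    and K_large: "real K \<ge> 12 * (f x0 - finf) / (c * \<epsilon>\<^sup>2)"
  shows "Min ((\<lambda>k. integral\<^sup>L M (\<lambda>\<omega>. ((inverse c *\<^sub>R D) *v gradf (x k \<omega>)) \<bullet> gradf (x k \<omega>)))
              ` {0..<K}) \<le> \<epsilon>\<^sup>2"
proof -
  interpret S: det_cgd n fs g f finf fsinf Ls L D M \<mu> T x x0 gradf
    using n_pos f_def gradf_def[THEN meta_eq_to_obj_eq] grad fi_lb Li_pd fi_smooth f_lb L_psd f_smooth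
      prob T_meas T_indep T_distr T_psd T_int T_mean D_pd x_0 x_Suc int_lam DLD
    by (rule det_cgd.intro)
  have c_pos: "c > 0" unfolding c_def using pd_det_pos[OF D_pd] by simp
  have lamD_eq: "lamD = S.lamD"
    unfolding lamD_def S.lamD_def S.lam_def S.noise_matrix_def[abs_def] ..
  have normalized: "((inverse c *\<^sub>R D) *v gradf (x k \<omega>)) \<bullet> gradf (x k \<omega>)
      = gradf (x k \<omega>) \<bullet> (D *v gradf (x k \<omega>)) / c" for k \<omega>
    by (simp add: scaleR_matrix_vector_assoc[symmetric] inner_commute divide_inverse_commute)
  have int_G: "integrable M (\<lambda>\<omega>. gradf (x k \<omega>) \<bullet> (D *v gradf (x k \<omega>)))" for k
    using integrable_mult_right[OF int_norm[of k, unfolded normalized], of c] c_pos by simp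
  show ?thesis
    unfolding normalized
    using S.min_expected_gradient_norm_le[OF int_G c_pos eps_pos K_pos] lam_K lam_Delta K_large
    unfolding lamD_eq Deltainf_def S.fsinf_mean_def by simp
qed

end
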